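(* Let $G_1$ and $G_2$ be two vertex-disjoint finite simple graphs, each having at least one edge. Then $\mathcal{NC}(G_1\sqcup G_2)$ is not shellable, and hence not vertex decomposable.
   Context: For a finite simple graph $H$, the non-cover complex $\mathcal{NC}(H)$ is the simplicial complex whose simplices are the subsets $S\subseteq V(H)$ such that $V(H)\setminus S$ contains both endpoints of some edge of $H$. A simplicial complex $K$ is shellable if its facets (maximal simplices) can be ordered $F_1,\dots,F_t$ so that for each $k=2,\dots,t$ the complex $\big(\bigcup_{j<k}\Delta^{F_j}\big)\cap\Delta^{F_k}$ is pure of dimension $\dim(\Delta^{F_k})-1$, where $\Delta^F$ denotes the full simplex on $F$. For a simplicial complex $K$ and a vertex $v$, $\mathrm{lk}(v,K)=\{\tau\in K: v\notin\tau,\ \tau\cup\{v\}\in K\}$ and $\mathrm{del}(v,K)=\{\tau\in K: v\notin\tau\}$. $K$ is vertex decomposable if $K$ is a simplex (including $\{\emptyset\}$), or $K$ has a vertex $v$ such that $\mathrm{lk}(v,K)$ and $\mathrm{del}(v,K)$ are vertex decomposable and every facet of $\mathrm{del}(v,K)$ is a facet of $K$. *)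

theory Defs
  imports Main
begin

definition simple_graph :: "'a set \<Rightarrow> 'a set set \<Rightarrow> bool" where
  "simple_graph V E \<longleftrightarrow> finite V \<and> (\<forall>e\<in>E. e \<subseteq> V \<and> card e = 2)"

definition non_cover_complex :: "'a set \<Rightarrow> 'a set set \<Rightarrow> 'a set set" where
  "non_cover_complex V E = {S. S \<subseteq> V \<and> (\<exists>e\<in>E. e \<subseteq> V - S)}"

text \<open>Simplicial complexes are represented as sets of (finite) sets closed under subsets.\<close>
definition facets :: "'a set set \<Rightarrow> 'a set set" where
  "facets K = {F \<in> K. \<forall>G\<in>K. F \<subseteq> G \<longrightarrow> G = F}"

definition sdim :: "'a set \<Rightarrow> int" where
  "sdim F = int (card F) - 1"

definition pure_of_dim :: "'a set set \<Rightarrow> int \<Rightarrow> bool" where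
  "pure_of_dim K d \<longleftrightarrow> (\<forall>F\<in>facets K. sdim F = d)"

definition shellable :: "'a set set \<Rightarrow> bool" where
  "shellable K \<longleftrightarrow> (\<exists>fs. distinct fs \<and> set fs = facets K \<and>
     (\<forall>k. 0 < k \<and> k < length fs \<longrightarrow>
        pure_of_dim ((\<Union>j<k. Pow (fs ! j)) \<inter> Pow (fs ! k)) (sdim (fs ! k) - 1)))"

definition link :: "'a \<Rightarrow> 'a set set \<Rightarrow> 'a set set" where
  "link v K = {\<tau>\<in>K. v \<notin> \<tau> \<and> insert v \<tau> \<in> K}"

definition deletion :: "'a \<Rightarrow> 'a set set \<Rightarrow> 'a set set" where
  "deletion v K = {\<tau>\<in>K. v \<notin> \<tau>}"

inductive vertex_decomposable :: "'a set set \<Rightarrow> bool" where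
  simplex: "finite F \<Longrightarrow> vertex_decomposable (Pow F)"
| decomp: "\<lbrakk> {v} \<in> K; vertex_decomposable (link v K); vertex_decomposable (deletion v K);
             facets (deletion v K) \<subseteq> facets K \<rbrakk> \<Longrightarrow> vertex_decomposable K"

end

theory Submission
  imports Defs
begin

text \<open>The facets of \<open>\<N>\<C>(H)\<close> are the complements \<open>V - e\<close> of the edges \<open>e\<close>, all of size \<open>|V| - 2\<close>,
  and two of them meet in a ridge only if their edges share a vertex. For a disjoint union
  \<open>G\<^sub>1 \<squnion> G\<^sub>2\<close> no edge of \<open>G\<^sub>1\<close> meets an edge of \<open>G\<^sub>2\<close>, so the complex is pure but not strongly
  connected. Both shellability and vertex decomposability force a pure complex to be strongly
  connected: in a shelling every new facet meets an earlier one in a ridge, and a vertex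
  decomposition at \<open>v\<close> glues the cone over the link to the deletion along a ridge.\<close>

definition simplicial_complex :: "'a set set \<Rightarrow> bool" where
  "simplicial_complex K \<longleftrightarrow> (\<forall>F\<in>K. \<forall>G. G \<subseteq> F \<longrightarrow> G \<in> K)"

definition pure :: "'a set set \<Rightarrow> bool" where
  "pure K \<longleftrightarrow> (\<exists>d. \<forall>F\<in>facets K. card F = d)"

definition facet_adjacent :: "'a set set \<Rightarrow> 'a set \<Rightarrow> 'a set \<Rightarrow> bool" where
  "facet_adjacent K F G \<longleftrightarrow> F \<in> facets K \<and> G \<in> facets K \<and>
     card (F \<inter> G) + 1 = card F \<and> card (F \<inter> G) + 1 = card G"

definition strongly_connected :: "'a set set \<Rightarrow> bool" where
  "strongly_connected K \<longleftrightarrow> (\<forall>F\<in>facets K. \<forall>G\<in>facets K. (facet_adjacent K)\<^sup>*\<^sup>* F G)"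

lemma symp_facet_adjacent: "symp (facet_adjacent K)"
  unfolding symp_def facet_adjacent_def by (simp add: Int_commute)

lemma strongly_connectedI:
  assumes "F\<^sub>0 \<in> facets K" and "\<And>F. F \<in> facets K \<Longrightarrow> (facet_adjacent K)\<^sup>*\<^sup>* F F\<^sub>0"
  shows "strongly_connected K"
  unfolding strongly_connected_def
proof (intro ballI)
  fix F G assume F: "F \<in> facets K" and G: "G \<in> facets K"
  have "(facet_adjacent K)\<^sup>*\<^sup>* F\<^sub>0 G"
    using sympD[OF symp_rtranclp[OF symp_facet_adjacent] assms(2)[OF G]] .
  then show "(facet_adjacent K)\<^sup>*\<^sup>* F G" by (rule rtranclp_trans[OF assms(2)[OF F]])
qed

lemma rtranclp_facet_adjacent_mono:
  assumes "facets D \<subseteq> facets K" and "(facet_adjacent D)\<^sup>*\<^sup>* F G"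
  shows "(facet_adjacent K)\<^sup>*\<^sup>* F G"
  using mono_rtranclp[of "facet_adjacent D" "facet_adjacent K"] assms
  unfolding facet_adjacent_def by blast

lemma exists_facet_superset:
  assumes "finite K" and "X \<in> K"
  shows "\<exists>F\<in>facets K. X \<subseteq> F"
proof -
  obtain F where "F \<in> K" "X \<subseteq> F" "\<forall>G\<in>K. F \<subseteq> G \<longrightarrow> F = G"
    using finite_has_maximal2[OF assms] by blast
  then show ?thesis unfolding facets_def by blast
qed

lemma shelling_step_facet_adjacent:
  assumes "distinct fs" and "set fs = facets K" and "pure K" and "\<forall>F\<in>facets K. finite F"
    and "0 < k" and "k < length fs"
    and "pure_of_dim ((\<Union>j<k. Pow (fs ! j)) \<inter> Pow (fs ! k)) (sdim (fs ! k) - 1)"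
  shows "\<exists>j<k. facet_adjacent K (fs ! k) (fs ! j)"
proof -
  define C where "C = (\<Union>j<k. Pow (fs ! j)) \<inter> Pow (fs ! k)"
  have Fk: "fs ! k \<in> facets K" using assms(2,6) nth_mem by blast
  have fin: "finite (fs ! k)" using assms(4) Fk by blast
  have "{} \<in> C" and "finite C" using assms(5) fin unfolding C_def by auto
  then obtain X where X: "X \<in> facets C" using exists_facet_superset by blast
  then have "sdim X = sdim (fs ! k) - 1" using assms(7) unfolding C_def pure_of_dim_def by blast
  then have cX: "card X + 1 = card (fs ! k)" unfolding sdim_def by simp
  from X obtain j where j: "j < k" and Xj: "X \<subseteq> fs ! k \<inter> fs ! j"
    unfolding facets_def C_def by blast
  have jlen: "j < length fs" using j assms(6) by simp
  have Fj: "fs ! j \<in> facets K" using nth_mem[OF jlen] assms(2) by blast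
  have "fs ! j \<noteq> fs ! k" using nth_eq_iff_index_eq[OF assms(1) jlen assms(6)] j by simp
  then have "\<not> fs ! k \<subseteq> fs ! j" using Fk Fj unfolding facets_def by blast
  then have "card (fs ! k \<inter> fs ! j) < card (fs ! k)" by (intro psubset_card_mono fin) blast
  moreover have "card X \<le> card (fs ! k \<inter> fs ! j)" using Xj fin by (intro card_mono) auto
  ultimately have "card (fs ! k \<inter> fs ! j) + 1 = card (fs ! k)" using cX by linarith
  moreover have "card (fs ! j) = card (fs ! k)" using assms(3) Fj Fk unfolding pure_def by metis
  ultimately show ?thesis using j Fj Fk unfolding facet_adjacent_def by auto
qed

lemma shellable_pure_strongly_connected:
  assumes "shellable K" and "pure K" and "\<forall>F\<in>facets K. finite F"
  shows "strongly_connected K"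
proof -
  obtain fs where fs: "distinct fs" "set fs = facets K"
    and shelling: "\<And>k. 0 < k \<Longrightarrow> k < length fs \<Longrightarrow>
        pure_of_dim ((\<Union>j<k. Pow (fs ! j)) \<inter> Pow (fs ! k)) (sdim (fs ! k) - 1)"
    using assms(1) unfolding shellable_def by blast
  have to_first: "(facet_adjacent K)\<^sup>*\<^sup>* (fs ! k) (fs ! 0)" if "k < length fs" for k
    using that
  proof (induction k rule: less_induct)
    case (less k)
    show ?case
    proof (cases "k = 0")
      case False
      then obtain j where "j < k" "facet_adjacent K (fs ! k) (fs ! j)"
        using shelling_step_facet_adjacent[OF fs assms(2,3) _ less.prems shelling] less.prems by blast
      then show ?thesis using less.IH less.prems by (meson converse_rtranclp_into_rtranclp order.strict_trans)
    qed simp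
  qed
  show ?thesis
  proof (cases "fs = []")
    case True
    then show ?thesis using fs(2) unfolding strongly_connected_def by simp
  next
    case False
    then have "fs ! 0 \<in> facets K" using fs(2) by (metis length_greater_0_conv nth_mem)
    then show ?thesis
    proof (rule strongly_connectedI)
      fix F assume "F \<in> facets K"
      then obtain k where "k < length fs" "F = fs ! k" using fs(2) by (metis in_set_conv_nth)
      then show "(facet_adjacent K)\<^sup>*\<^sup>* F (fs ! 0)" using to_first by blast
    qed
  qed
qed

lemma simplicial_complex_link: "simplicial_complex K \<Longrightarrow> simplicial_complex (link v K)"
  unfolding simplicial_complex_def link_def by (metis (no_types, lifting) insert_mono mem_Collect_eq subsetD)

lemma simplicial_complex_deletion: "simplicial_complex K \<Longrightarrow> simplicial_complex (deletion v K)"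
  unfolding simplicial_complex_def deletion_def by blast

lemma finite_face:
  assumes "simplicial_complex K" and "finite K" and "F \<in> K"
  shows "finite F"
proof -
  have "Pow F \<subseteq> K" using assms(1,3) unfolding simplicial_complex_def by blast
  then show ?thesis using assms(2) finite_subset by fastforce
qed

lemma facets_link_insert:
  assumes "simplicial_complex K" and "H \<in> facets (link v K)"
  shows "insert v H \<in> facets K" and "v \<notin> H"
proof -
  have H: "v \<notin> H" "insert v H \<in> K" and max: "\<forall>G\<in>link v K. H \<subseteq> G \<longrightarrow> G = H"
    using assms(2) unfolding facets_def link_def by blast+
  show "v \<notin> H" by fact
  show "insert v H \<in> facets K" unfolding facets_def
  proof (intro CollectI conjI ballI impI)
    fix G assume G: "G \<in> K" "insert v H \<subseteq> G"
    then have "G - {v} \<in> link v K"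
      using assms(1) unfolding simplicial_complex_def link_def by (auto simp: insert_absorb)
    then have "G - {v} = H" using max G(2) H(1) by auto
    then show "G = insert v H" using G(2) by auto
  qed fact
qed

lemma facet_minus_in_facets_link:
  assumes "simplicial_complex K" and "F \<in> facets K" and "v \<in> F"
  shows "F - {v} \<in> facets (link v K)"
proof -
  have FK: "F \<in> K" and max: "\<forall>G\<in>K. F \<subseteq> G \<longrightarrow> G = F"
    using assms(2) unfolding facets_def by auto
  have "F - {v} \<in> link v K"
    using assms(1,3) FK unfolding simplicial_complex_def link_def by (auto simp: insert_absorb)
  moreover have "G = F - {v}" if G: "G \<in> link v K" and sub: "F - {v} \<subseteq> G" for G
  proof -
    have "insert v G \<in> K" "v \<notin> G" using G unfolding link_def by auto
    moreover have "F \<subseteq> insert v G" using sub by blast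
    ultimately have "insert v G = F" using max by blast
    then show ?thesis using \<open>v \<notin> G\<close> by auto
  qed
  ultimately show ?thesis unfolding facets_def by blast
qed

lemma facet_adjacent_link_insert:
  assumes "simplicial_complex K" and "finite K" and "facet_adjacent (link v K) H H'"
  shows "facet_adjacent K (insert v H) (insert v H')"
proof -
  have H: "H \<in> facets (link v K)" and H': "H' \<in> facets (link v K)"
    using assms(3) unfolding facet_adjacent_def by blast+
  have "finite H" "finite H'"
    using H H' finite_face[OF assms(1,2)] unfolding facets_def link_def by blast+
  moreover have "insert v H \<inter> insert v H' = insert v (H \<inter> H')" by blast
  ultimately show ?thesis
    using assms(3) facets_link_insert[OF assms(1) H] facets_link_insert[OF assms(1) H']
    unfolding facet_adjacent_def by simp
qed

lemma rtranclp_facet_adjacent_link_insert: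
  assumes "simplicial_complex K" and "finite K" and "(facet_adjacent (link v K))\<^sup>*\<^sup>* H H'"
  shows "(facet_adjacent K)\<^sup>*\<^sup>* (insert v H) (insert v H')"
  using assms(3)
proof (induction rule: rtranclp_induct)
  case (step G G')
  then show ?case using facet_adjacent_link_insert[OF assms(1,2)] by (meson rtranclp.rtrancl_into_rtrancl)
qed simp

lemma pure_link:
  assumes "simplicial_complex K" and "finite K" and "pure K"
  shows "pure (link v K)"
proof -
  obtain d where d: "\<And>F. F \<in> facets K \<Longrightarrow> card F = d" using assms(3) unfolding pure_def by blast
  have "card H = d - 1" if H: "H \<in> facets (link v K)" for H
  proof -
    have "finite H" using H finite_face[OF assms(1,2)] unfolding facets_def link_def by blast
    moreover have "card (insert v H) = d" using facets_link_insert[OF assms(1) H] d by blast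
    ultimately show ?thesis using facets_link_insert(2)[OF assms(1) H] by simp
  qed
  then show ?thesis unfolding pure_def by blast
qed

lemma pure_deletion:
  assumes "facets (deletion v K) \<subseteq> facets K" and "pure K"
  shows "pure (deletion v K)"
  using assms unfolding pure_def by blast

lemma cone_facet_adjacent_deletion_facet:
  assumes "simplicial_complex K" and "finite K" and "pure K" and "{v} \<in> K"
    and "facets (deletion v K) \<subseteq> facets K"
  obtains H D\<^sub>0 where "H \<in> facets (link v K)" and "D\<^sub>0 \<in> facets (deletion v K)"
    and "facet_adjacent K (insert v H) D\<^sub>0"
proof -
  have "{} \<in> link v K" using assms(1,4) unfolding simplicial_complex_def link_def by auto
  moreover have "finite (link v K)" using assms(2) unfolding link_def by simp
  ultimately obtain H where H: "H \<in> facets (link v K)" using exists_facet_superset by blast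
  have vH: "v \<notin> H" "insert v H \<in> facets K" using facets_link_insert[OF assms(1) H] by auto
  have "H \<in> deletion v K" using H unfolding facets_def link_def deletion_def by auto
  moreover have "finite (deletion v K)" using assms(2) unfolding deletion_def by simp
  ultimately obtain D\<^sub>0 where D\<^sub>0: "D\<^sub>0 \<in> facets (deletion v K)" "H \<subseteq> D\<^sub>0"
    using exists_facet_superset by blast
  have D\<^sub>0K: "D\<^sub>0 \<in> facets K" "v \<notin> D\<^sub>0" using D\<^sub>0(1) assms(5) unfolding facets_def deletion_def by auto
  have "finite H" using H finite_face[OF assms(1,2)] unfolding facets_def link_def by blast
  moreover have "insert v H \<inter> D\<^sub>0 = H" using D\<^sub>0(2) D\<^sub>0K(2) by auto
  ultimately have "card (insert v H \<inter> D\<^sub>0) + 1 = card (insert v H)" using vH(1) by simp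
  moreover have "card (insert v H) = card D\<^sub>0" using assms(3) vH(2) D\<^sub>0K(1) unfolding pure_def by metis
  ultimately have "facet_adjacent K (insert v H) D\<^sub>0" using vH(2) D\<^sub>0K(1) unfolding facet_adjacent_def by simp
  then show ?thesis using that H D\<^sub>0(1) by blast
qed

lemma vertex_decomposable_pure_strongly_connected:
  assumes "vertex_decomposable K" and "simplicial_complex K" and "finite K" and "pure K"
  shows "strongly_connected K"
  using assms
proof (induction K rule: vertex_decomposable.induct)
  case (simplex F)
  have "facets (Pow F) = {F}" unfolding facets_def by auto
  then show ?case unfolding strongly_connected_def by simp
next
  case (decomp v K)
  note K = decomp.prems(1,2)
  have "finite (link v K)" "finite (deletion v K)" using K(2) unfolding link_def deletion_def by simp_all
  then have scL: "strongly_connected (link v K)" and scD: "strongly_connected (deletion v K)"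
    using decomp.IH simplicial_complex_link[OF K(1)] simplicial_complex_deletion[OF K(1)]
      pure_link[OF K decomp.prems(3)] pure_deletion[OF decomp.hyps(4) decomp.prems(3)] by blast+
  obtain H D\<^sub>0 where H: "H \<in> facets (link v K)" and D\<^sub>0: "D\<^sub>0 \<in> facets (deletion v K)"
    and bridge: "facet_adjacent K (insert v H) D\<^sub>0"
    using cone_facet_adjacent_deletion_facet[OF K decomp.prems(3) decomp.hyps(1,4)] by blast
  show ?case
  proof (rule strongly_connectedI)
    show "D\<^sub>0 \<in> facets K" using D\<^sub>0 decomp.hyps(4) by blast
  next
    fix F assume F: "F \<in> facets K"
    show "(facet_adjacent K)\<^sup>*\<^sup>* F D\<^sub>0"
    proof (cases "v \<in> F")
      case True
      then have "(facet_adjacent (link v K))\<^sup>*\<^sup>* (F - {v}) H"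
        using scL H facet_minus_in_facets_link[OF K(1) F] unfolding strongly_connected_def by blast
      then have "(facet_adjacent K)\<^sup>*\<^sup>* F (insert v H)"
        using rtranclp_facet_adjacent_link_insert[OF K] True by (metis insert_Diff)
      then show ?thesis using bridge by (rule rtranclp.rtrancl_into_rtrancl)
    next
      case False
      then have "F \<in> facets (deletion v K)" using F unfolding facets_def deletion_def by auto
      then show ?thesis
        using scD D\<^sub>0 rtranclp_facet_adjacent_mono[OF decomp.hyps(4)] unfolding strongly_connected_def by blast
    qed
  qed
qed

lemma simplicial_complex_non_cover_complex: "simplicial_complex (non_cover_complex V E)"
  unfolding simplicial_complex_def non_cover_complex_def by blast

lemma finite_non_cover_complex: "finite V \<Longrightarrow> finite (non_cover_complex V E)"
  unfolding non_cover_complex_def by (simp add: Collect_mono_iff)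

lemma facets_non_cover_complex:
  assumes "simple_graph V E"
  shows "facets (non_cover_complex V E) = (\<lambda>e. V - e) ` E"
proof -
  have edge: "e \<subseteq> V" "card e = 2" "finite e" if "e \<in> E" for e
    using assms that unfolding simple_graph_def by (auto intro: card_ge_0_finite)
  have max: "G = V - e"
    if e: "e \<in> E" and G: "G \<in> non_cover_complex V E" and sub: "V - e \<subseteq> G" for e G
  proof -
    obtain e' where e': "e' \<in> E" "e' \<subseteq> V - G" "G \<subseteq> V"
      using G unfolding non_cover_complex_def by blast
    then have "e' \<subseteq> e" using sub edge(1)[OF e] by blast
    then have "e' = e" using card_subset_eq[OF edge(3)[OF e]] edge(2) e e'(1) by simp
    then show ?thesis using e' sub by blast
  qed
  have in_nc: "V - e \<in> non_cover_complex V E" if "e \<in> E" for e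
    using that edge(1)[OF that] unfolding non_cover_complex_def by blast
  show ?thesis
  proof (intro equalityI subsetI)
    fix F assume F: "F \<in> facets (non_cover_complex V E)"
    then obtain e where e: "e \<in> E" "F \<subseteq> V - e"
      unfolding facets_def non_cover_complex_def by blast
    then show "F \<in> (\<lambda>e. V - e) ` E" using F in_nc[OF e(1)] unfolding facets_def by blast
  next
    fix F assume "F \<in> (\<lambda>e. V - e) ` E"
    then show "F \<in> facets (non_cover_complex V E)"
      using in_nc max unfolding facets_def by blast
  qed
qed

lemma card_diff_edge:
  assumes "simple_graph V E" and "e \<in> E"
  shows "card (V - e) = card V - 2"
  using assms card_Diff_subset unfolding simple_graph_def by (metis card.infinite zero_neq_numeral)

lemma card_diff_disjoint_edges:
  assumes "simple_graph V E" and "a \<in> E" and "b \<in> E" and "a \<inter> b = {}"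
  shows "card ((V - a) \<inter> (V - b)) = card V - 4" and "4 \<le> card V"
proof -
  have ab: "a \<subseteq> V" "b \<subseteq> V" "card a = 2" "card b = 2" and "finite V"
    using assms unfolding simple_graph_def by auto
  then have "card (a \<union> b) = 4" using assms(4) by (metis card_Un_disjoint card.infinite numeral_Bit0 zero_neq_numeral)
  moreover have "(V - a) \<inter> (V - b) = V - (a \<union> b)" by blast
  ultimately show "card ((V - a) \<inter> (V - b)) = card V - 4" "4 \<le> card V"
    using ab \<open>finite V\<close> card_Diff_subset[of "a \<union> b" V] card_mono[of V "a \<union> b"]
    by (auto intro: finite_subset)
qed

lemma pure_non_cover_complex:
  assumes "simple_graph V E"
  shows "pure (non_cover_complex V E)"
  unfolding pure_def facets_non_cover_complex[OF assms] using card_diff_edge[OF assms] by blast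

lemma non_cover_complex_disjoint_union_not_strongly_connected:
  assumes G\<^sub>1: "simple_graph V\<^sub>1 E\<^sub>1" and G\<^sub>2: "simple_graph V\<^sub>2 E\<^sub>2" and "V\<^sub>1 \<inter> V\<^sub>2 = {}"
    and "E\<^sub>1 \<noteq> {}" and "E\<^sub>2 \<noteq> {}"
  shows "\<not> strongly_connected (non_cover_complex (V\<^sub>1 \<union> V\<^sub>2) (E\<^sub>1 \<union> E\<^sub>2))"
proof
  define V where "V = V\<^sub>1 \<union> V\<^sub>2"
  define E where "E = E\<^sub>1 \<union> E\<^sub>2"
  define K where "K = non_cover_complex V E"
  assume "strongly_connected (non_cover_complex (V\<^sub>1 \<union> V\<^sub>2) (E\<^sub>1 \<union> E\<^sub>2))"
  then have sc: "strongly_connected K" unfolding K_def V_def E_def .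
  have G: "simple_graph V E" using G\<^sub>1 G\<^sub>2 unfolding V_def E_def simple_graph_def by blast
  have facets: "facets K = (\<lambda>e. V - e) ` E" unfolding K_def by (rule facets_non_cover_complex[OF G])
  have edge: "e \<subseteq> V" "e \<noteq> {}" if "e \<in> E" for e
    using G that unfolding simple_graph_def by fastforce+
  have disjoint: "a \<inter> b = {}" if "a \<in> E\<^sub>1" "b \<in> E\<^sub>2" for a b
    using that G\<^sub>1 G\<^sub>2 \<open>V\<^sub>1 \<inter> V\<^sub>2 = {}\<close> unfolding simple_graph_def by blast
  have not_both: "e \<notin> E\<^sub>2" if "e \<in> E\<^sub>1" for e
    using disjoint[OF that] that edge unfolding E_def by blast
  have complement_inj: "a = b" if "a \<in> E" "b \<in> E" "V - a = V - b" for a b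
    using that edge by (metis double_diff order_refl)
  \<comment> \<open>adjacent facets \<open>V - a\<close>, \<open>V - b\<close> must share \<open>|V| - 3\<close> vertices, so \<open>a\<close> and \<open>b\<close> meet\<close>
  have same_side: "b \<in> E\<^sub>1" if "a \<in> E\<^sub>1" "b \<in> E" "facet_adjacent K (V - a) (V - b)" for a b
  proof (rule ccontr)
    assume "b \<notin> E\<^sub>1"
    then have "a \<inter> b = {}" using disjoint that(1,2) unfolding E_def by blast
    then have "card ((V - a) \<inter> (V - b)) = card V - 4" "4 \<le> card V"
      using card_diff_disjoint_edges[OF G _ that(2)] that(1) unfolding E_def by auto
    moreover have "card (V - a) = card V - 2" using card_diff_edge[OF G] that(1) unfolding E_def by blast
    ultimately show False using that(3) unfolding facet_adjacent_def by linarith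
  qed
  obtain e\<^sub>1 e\<^sub>2 where e: "e\<^sub>1 \<in> E\<^sub>1" "e\<^sub>2 \<in> E\<^sub>2" using assms(4,5) by blast
  then have "(facet_adjacent K)\<^sup>*\<^sup>* (V - e\<^sub>1) (V - e\<^sub>2)"
    using sc unfolding strongly_connected_def facets E_def by blast
  then have "\<exists>e\<in>E\<^sub>1. V - e\<^sub>2 = V - e"
  proof (induction rule: rtranclp_induct)
    case (step F F')
    then obtain a b where "a \<in> E\<^sub>1" "F = V - a" "b \<in> E" "F' = V - b"
      using facets unfolding facet_adjacent_def by blast
    then show ?case using same_side step(2) by blast
  qed (use e in blast)
  then show False using complement_inj not_both e unfolding E_def by blast
qed

theorem proposition4p4:
  fixes V1 V2 :: "'a set" and E1 E2 :: "'a set set"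
  assumes "simple_graph V1 E1" and "simple_graph V2 E2"
    and "V1 \<inter> V2 = {}"
    and "E1 \<noteq> {}" and "E2 \<noteq> {}"
  shows "\<not> shellable (non_cover_complex (V1 \<union> V2) (E1 \<union> E2)) \<and>
         \<not> vertex_decomposable (non_cover_complex (V1 \<union> V2) (E1 \<union> E2))"
proof -
  let ?K = "non_cover_complex (V1 \<union> V2) (E1 \<union> E2)"
  have G: "simple_graph (V1 \<union> V2) (E1 \<union> E2)"
    using assms(1,2) unfolding simple_graph_def by blast
  have K: "simplicial_complex ?K" by (rule simplicial_complex_non_cover_complex)
  have "finite (V1 \<union> V2)" using assms(1,2) unfolding simple_graph_def by simp
  then have finite: "finite ?K" by (rule finite_non_cover_complex)
  have finite_facets: "\<forall>F\<in>facets ?K. finite F" using finite_face[OF K finite] unfolding facets_def by blast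
  have pure: "pure ?K" by (rule pure_non_cover_complex[OF G])
  have "\<not> strongly_connected ?K"
    by (rule non_cover_complex_disjoint_union_not_strongly_connected[OF assms])
  then show ?thesis
    using shellable_pure_strongly_connected[OF _ pure finite_facets]
      vertex_decomposable_pure_strongly_connected[OF _ K finite pure] by blast
qed

end
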